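(* Under the hypotheses of the previous setting (nonzero $\mathsf k_1,\mathsf k_2,\mathsf k_3$, a Bethe solution with pairwise distinct roots $\lambda_l\ne\lambda_m$, $\mu_p\ne\mu_q$, $\mu_q\ne\lambda_m$ and $\{\mu_h\}\cap\{\xi_n\}=\emptyset$), let $t_1(\lambda)=t_1(\lambda|\{\lambda_j\},\{\mu_h\})$, $x_a=t_1(\xi_a)$, and let $t^{(m)}_n(\lambda)=t^{(m)}_n(\lambda|\{x_a\})$ be the associated fused polynomials. Then the null out-boundary conditions $t^{(2+n)}_{3+m}(\lambda)=0$ hold for all $\lambda\in\mathbb C$ and all integers $n,m\ge0$, and the inner-boundary condition $\mathsf k_2\mathsf k_3\,d(\lambda)\,t_3(\lambda)=\mathsf k_1\,t^{(2)}_2(\lambda+\eta)$ holds for all $\lambda\in\mathbb C$; equivalently $\mathsf k_2\mathsf k_3d(\lambda)t_3(\lambda)=\mathsf k_1\big(t_2(\lambda)t_2(\lambda+\eta)-t_3(\lambda)t_1(\lambda+\eta)\big)$.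
   Context: Fix a nonzero complex number $\eta$, an integer $\mathsf N\ge1$ and complex inhomogeneities $\xi_1,\dots,\xi_{\mathsf N}$ with $\xi_a-\xi_b\notin\eta\mathbb Z$ for $a\ne b$. This concerns the fundamental $gl_{1|2}$ model with diagonal twist $K=\operatorname{diag}(\mathsf k_1,\mathsf k_2,\mathsf k_3)$. Write $d(\lambda)=\prod_{n=1}^{\mathsf N}(\lambda-\xi_n)$, $a(\lambda)=d(\lambda+\eta)$, and $f^{(m)}_a(\lambda)=\prod_{b\ne a}\frac{\lambda-\xi_b}{\xi_a-\xi_b}\prod_{b=1}^{\mathsf N}\prod_{r=1}^{m-1}\frac{1}{\xi_a-\xi_b+r\eta}$. Let $T_{\infty,1}=\mathsf k_1-\mathsf k_2-\mathsf k_3$ and $T_{\infty,n}=\mathsf k_1^{n-2}(\mathsf k_1-\mathsf k_2)(\mathsf k_1-\mathsf k_3)$ for $n\ge2$. Interpolation polynomials in unknowns $\{x_a\}$: $t_1(\lambda|\{x_a\})=T_{\infty,1}d(\lambda)+\sum_af^{(1)}_a(\lambda)x_a$ and, for $n\ge1$, $t_{n+1}(\lambda|\{x_a\})=\prod_{r=1}^nd(\lambda+r\eta)\big[T_{\infty,n+1}d(\lambda)+\sum_af^{(n+1)}_a(\lambda)t_n(\xi_a+\eta|\{x_a\})x_a\big]$. Fused polynomials: $t^{(m)}_n(\lambda|\{x_a\})=\det_{1\le i,j\le m}t_{n+i-j}(\lambda-(i-1)\eta|\{x_a\})$ with $t_0\equiv1$, $t_k\equiv0$ for $k<0$. Bethe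 Ansatz: $Q_1(\lambda)=\prod_{l=1}^L(\lambda-\lambda_l)$, $Q_2(\lambda)=\prod_{m=1}^M(\lambda-\mu_m)$; Bethe equations: $\mathsf k_1Q_2(\lambda_j)a(\lambda_j)=\mathsf k_2d(\lambda_j)Q_2(\lambda_j+\eta)$ ($j\le L$) and $\mathsf k_2Q_2(\mu_j+\eta)Q_1(\mu_j-\eta)=-\mathsf k_3Q_2(\mu_j-\eta)Q_1(\mu_j)$ ($j\le M$). Define $\Lambda_1(\lambda)=\mathsf k_1a(\lambda)\frac{Q_1(\lambda-\eta)}{Q_1(\lambda)}$, $\Lambda_2(\lambda)=\mathsf k_2d(\lambda)\frac{Q_1(\lambda-\eta)Q_2(\lambda+\eta)}{Q_1(\lambda)Q_2(\lambda)}$, $\Lambda_3(\lambda)=\mathsf k_3d(\lambda)\frac{Q_2(\lambda-\eta)}{Q_2(\lambda)}$, and $t_1(\lambda|\{\lambda_j\},\{\mu_h\})=\Lambda_1(\lambda)-\Lambda_2(\lambda)-\Lambda_3(\lambda)$. *)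

theory Defs
  imports Complex_Main "Jordan_Normal_Form.Determinant"
begin

text \<open>Inhomogeneities are xi 1, ..., xi N. Bethe roots are lam 1..lam L and mu 1..mu M.\<close>

definition dfun :: "(nat \<Rightarrow> complex) \<Rightarrow> nat \<Rightarrow> complex \<Rightarrow> complex" where
  "dfun xi N z = (\<Prod>n=1..N. (z - xi n))"

definition afun :: "complex \<Rightarrow> (nat \<Rightarrow> complex) \<Rightarrow> nat \<Rightarrow> complex \<Rightarrow> complex" where
  "afun eta xi N z = dfun xi N (z + eta)"

definition fcoef :: "complex \<Rightarrow> (nat \<Rightarrow> complex) \<Rightarrow> nat \<Rightarrow> nat \<Rightarrow> nat \<Rightarrow> complex \<Rightarrow> complex" where
  "fcoef eta xi N m a z =
     (\<Prod>b\<in>{1..N} - {a}. (z - xi b) / (xi a - xi b)) *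
     (\<Prod>b=1..N. \<Prod>r=1..m-1. 1 / (xi a - xi b + of_nat r * eta))"

definition Tinf :: "complex \<Rightarrow> complex \<Rightarrow> complex \<Rightarrow> nat \<Rightarrow> complex" where
  "Tinf k1 k2 k3 n = (if n = 1 then k1 - k2 - k3 else k1 ^ (n - 2) * (k1 - k2) * (k1 - k3))"

fun tpol :: "complex \<Rightarrow> (nat \<Rightarrow> complex) \<Rightarrow> nat \<Rightarrow> complex \<Rightarrow> complex \<Rightarrow> complex
              \<Rightarrow> (nat \<Rightarrow> complex) \<Rightarrow> nat \<Rightarrow> complex \<Rightarrow> complex" where
  "tpol eta xi N k1 k2 k3 x 0 z = 1"
| "tpol eta xi N k1 k2 k3 x (Suc 0) z =
     Tinf k1 k2 k3 1 * dfun xi N z + (\<Sum>a=1..N. fcoef eta xi N 1 a z * x a)"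
| "tpol eta xi N k1 k2 k3 x (Suc (Suc n)) z =
     (\<Prod>r=1..Suc n. dfun xi N (z + of_nat r * eta)) *
     (Tinf k1 k2 k3 (Suc (Suc n)) * dfun xi N z +
      (\<Sum>a=1..N. fcoef eta xi N (Suc (Suc n)) a z * tpol eta xi N k1 k2 k3 x (Suc n) (xi a + eta) * x a))"

definition tZ :: "complex \<Rightarrow> (nat \<Rightarrow> complex) \<Rightarrow> nat \<Rightarrow> complex \<Rightarrow> complex \<Rightarrow> complex
              \<Rightarrow> (nat \<Rightarrow> complex) \<Rightarrow> int \<Rightarrow> complex \<Rightarrow> complex" where
  "tZ eta xi N k1 k2 k3 x k z = (if k < 0 then 0 else tpol eta xi N k1 k2 k3 x (nat k) z)"

text \<open>Fused polynomials t^(m)_n(z) = det_{1<=i,j<=m} t_{n+i-j}(z-(i-1) eta) (0-based indices here).\<close>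
definition tfused :: "complex \<Rightarrow> (nat \<Rightarrow> complex) \<Rightarrow> nat \<Rightarrow> complex \<Rightarrow> complex \<Rightarrow> complex
              \<Rightarrow> (nat \<Rightarrow> complex) \<Rightarrow> nat \<Rightarrow> nat \<Rightarrow> complex \<Rightarrow> complex" where
  "tfused eta xi N k1 k2 k3 x m n z =
     det (mat m m (\<lambda>(i, j). tZ eta xi N k1 k2 k3 x (int n + int i - int j) (z - of_nat i * eta)))"

definition Qpol :: "(nat \<Rightarrow> complex) \<Rightarrow> nat \<Rightarrow> complex \<Rightarrow> complex" where
  "Qpol r K z = (\<Prod>l=1..K. (z - r l))"

definition tBethe :: "complex \<Rightarrow> (nat \<Rightarrow> complex) \<Rightarrow> nat \<Rightarrow> complex \<Rightarrow> complex \<Rightarrow> complex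
     \<Rightarrow> (nat \<Rightarrow> complex) \<Rightarrow> nat \<Rightarrow> (nat \<Rightarrow> complex) \<Rightarrow> nat \<Rightarrow> complex \<Rightarrow> complex" where
  "tBethe eta xi N k1 k2 k3 lam L mu M z =
     k1 * afun eta xi N z * Qpol lam L (z - eta) / Qpol lam L z
   - k2 * dfun xi N z * Qpol lam L (z - eta) * Qpol mu M (z + eta) / (Qpol lam L z * Qpol mu M z)
   - k3 * dfun xi N z * Qpol mu M (z - eta) / Qpol mu M z"

end

theory Submission
  imports Defs "HOL-Computational_Algebra.Polynomial"
begin

(* Interpolating the Bethe eigenvalue t1 at the inhomogeneities reproduces it everywhere: t1 Q1 Q2
   equals the numerator of \<Lambda>1 - \<Lambda>2 - \<Lambda>3, a polynomial identity of degree N + L + M which the Bethe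
   equations make hold at the N + L + M distinct points \<xi>, \<lambda>, \<mu>. The same identity shows that
   E(w) = k1 t1(w + \<eta>) + k2 k3 d(w) vanishes at every \<lambda>_j, so E = Q1 F for a polynomial F.
   Induction through the interpolation recursion then gives the closed form
     t_{n+2}(z) = k1^n Q1(z - \<eta>) F(z + n\<eta>) \<Prod>_{r=1}^{n+1} d(z + r\<eta>).
   Hence the first two columns of the matrix defining t^(2+n)_(3+m) are proportional, and the
   inner-boundary identity is a direct computation with the closed forms of t2, t3 and E. *)

definition shift_poly :: "'a::comm_ring_1 poly \<Rightarrow> 'a \<Rightarrow> 'a poly" where
  "shift_poly p c = p \<circ>\<^sub>p [:c, 1:]"

lemma poly_shift_poly [simp]: "poly (shift_poly p c) z = poly p (z + c)"
  by (simp add: shift_poly_def poly_pcompose add.commute)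

lemma degree_shift_poly [simp]: "degree (shift_poly (p :: 'a::idom poly) c) = degree p"
  by (simp add: shift_poly_def degree_pcompose)

lemma lead_coeff_shift_poly [simp]: "lead_coeff (shift_poly (p :: 'a::idom poly) c) = lead_coeff p"
  by (simp add: shift_poly_def lead_coeff_comp)

lemma shift_poly_0_left [simp]: "shift_poly 0 c = 0"
  by (simp add: shift_poly_def)

lemma shift_poly_eq_0_iff [simp]: "shift_poly (p :: 'a::idom poly) c = 0 \<longleftrightarrow> p = 0"
  by (metis lead_coeff_shift_poly leading_coeff_0_iff)

lemma degree_mult_shift_poly:
  fixes p q :: "'a::idom poly"
  shows "degree (shift_poly p a * shift_poly q b) = degree (p * q)"
  by (cases "p = 0 \<or> q = 0") (auto simp: degree_mult_eq)

lemma lead_coeff_mult_shift_poly: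
  fixes p q :: "'a::idom poly"
  shows "lead_coeff (shift_poly p a * shift_poly q b) = lead_coeff (p * q)"
  by (metis lead_coeff_mult lead_coeff_shift_poly)

lemma shift_poly_0_right [simp]: "shift_poly p 0 = p"
  by (simp add: shift_poly_def)

lemma coeff_eq_if_degree_lead_coeff_eq:
  assumes "degree p = degree q" "lead_coeff p = lead_coeff q" "degree p \<le> n"
  shows "coeff p n = coeff q n"
  using assms by (cases "degree p = n") (simp_all add: coeff_eq_0)

lemma coeff_shift_poly:
  fixes p :: "'a::idom poly"
  assumes "degree p \<le> n"
  shows "coeff (shift_poly p c) n = coeff p n"
  by (metis assms coeff_eq_if_degree_lead_coeff_eq degree_shift_poly lead_coeff_shift_poly)

lemma coeff_mult_degree_le:
  fixes p q :: "'a::idom poly"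
  assumes "degree p \<le> m" "degree q \<le> n"
  shows "coeff (p * q) (m + n) = coeff p m * coeff q n"
proof (cases "degree p = m \<and> degree q = n")
  case True
  then show ?thesis using coeff_mult_degree_sum[of p q] by simp
next
  case False
  with assms have "degree p < m \<or> degree q < n" by auto
  moreover have "degree (p * q) < m + n"
    using False assms degree_mult_le[of p q] by linarith
  ultimately show ?thesis by (auto simp: coeff_eq_0)
qed

definition root_poly :: "(nat \<Rightarrow> 'a::comm_ring_1) \<Rightarrow> nat set \<Rightarrow> 'a poly" where
  "root_poly r A = (\<Prod>a\<in>A. [:- r a, 1:])"

lemma poly_root_poly: "poly (root_poly r A) z = (\<Prod>a\<in>A. z - r a)"
  by (simp add: root_poly_def poly_prod)

lemma degree_root_poly [simp]: "finite A \<Longrightarrow> degree (root_poly (r :: nat \<Rightarrow> 'a::idom) A) = card A"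
  unfolding root_poly_def by (subst degree_prod_eq_sum_degree) auto

lemma lead_coeff_root_poly [simp]: "lead_coeff (root_poly (r :: nat \<Rightarrow> 'a::idom) A) = 1"
  by (simp add: root_poly_def lead_coeff_prod)

lemma root_poly_nonzero [simp]: "root_poly (r :: nat \<Rightarrow> 'a::idom) A \<noteq> 0"
  using lead_coeff_root_poly[of r A] by (metis leading_coeff_0_iff zero_neq_one)

lemma root_poly_dvd:
  fixes p :: "'a::idom poly"
  assumes "finite A" "inj_on r A" "\<And>a. a \<in> A \<Longrightarrow> poly p (r a) = 0"
  shows "root_poly r A dvd p"
  using assms
proof (induction A arbitrary: p rule: finite_induct)
  case empty
  then show ?case by (simp add: root_poly_def)
next
  case (insert a A p)
  obtain q where q: "p = [:- r a, 1:] * q"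
    using insert.prems(2) poly_eq_0_iff_dvd by blast
  have "poly q (r b) = 0" if "b \<in> A" for b
  proof -
    have "r b \<noteq> r a" using insert.prems(1) insert.hyps(2) that by (metis inj_onD insertCI)
    then show ?thesis using insert.prems(2)[of b] that q by simp
  qed
  then have "root_poly r A dvd q" using insert.IH insert.prems(1) by auto
  then have "[:- r a, 1:] * root_poly r A dvd p" unfolding q by (rule mult_dvd_mono[OF dvd_refl])
  then show ?case using insert.hyps by (simp add: root_poly_def)
qed

definition lagrange_basis :: "(nat \<Rightarrow> 'a::field) \<Rightarrow> nat set \<Rightarrow> nat \<Rightarrow> 'a poly" where
  "lagrange_basis xi A a = (\<Prod>b\<in>A - {a}. smult (1 / (xi a - xi b)) [:- xi b, 1:])"

lemma poly_lagrange_basis: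
  "poly (lagrange_basis xi A a) z = (\<Prod>b\<in>A - {a}. (z - xi b) / (xi a - xi b))"
  unfolding lagrange_basis_def poly_prod by (rule prod.cong) (simp_all add: divide_inverse algebra_simps)

lemma degree_lagrange_basis:
  assumes "finite A" "a \<in> A"
  shows "degree (lagrange_basis xi A a) \<le> card A - 1"
proof -
  have "degree (lagrange_basis xi A a) \<le> (\<Sum>b\<in>A - {a}. degree (smult (1 / (xi a - xi b)) [:- xi b, 1:]))"
    unfolding lagrange_basis_def by (rule degree_prod_sum_le[unfolded comp_def]) (use assms in auto)
  also have "\<dots> \<le> (\<Sum>b\<in>A - {a}. 1)" by (rule sum_mono) auto
  finally show ?thesis using assms by simp
qed

lemma poly_lagrange_basis_node:
  assumes "finite A" "inj_on xi A" "a \<in> A" "c \<in> A"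
  shows "poly (lagrange_basis xi A a) (xi c) = (if c = a then 1 else 0)"
proof (cases "c = a")
  case True
  have "xi a \<noteq> xi b" if "b \<in> A - {a}" for b
    using assms that by (auto dest: inj_onD)
  then show ?thesis using True by (simp add: poly_lagrange_basis)
next
  case False
  then show ?thesis using assms(1,4) by (auto simp: poly_lagrange_basis intro!: prod_zero bexI[of _ c])
qed

lemma lagrange_interpolation:
  fixes g :: "'a::field poly"
  assumes A: "finite A" "A \<noteq> {}" and inj: "inj_on xi A" and deg: "degree g \<le> card A"
  shows "g = smult (coeff g (card A)) (root_poly xi A)
             + (\<Sum>a\<in>A. smult (poly g (xi a)) (lagrange_basis xi A a))"
    (is "g = ?p + ?q")
proof (rule poly_eqI_degree_lead_coeff[where n = "card A" and A = "xi ` A"])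
  have deg_q: "degree ?q \<le> card A - 1"
    by (intro degree_sum_le order_trans[OF degree_smult_le] degree_lagrange_basis) (use A in auto)
  moreover have "0 < card A" using A by (simp add: card_gt_0_iff)
  ultimately have "coeff ?q (card A) = 0" by (intro coeff_eq_0) linarith
  moreover have "coeff (root_poly xi A) (card A) = 1"
    using lead_coeff_root_poly[of xi A] A by simp
  ultimately show "coeff g (card A) = coeff (?p + ?q) (card A)" by simp
  show "degree (?p + ?q) \<le> card A"
    using deg_q by (intro degree_add_le order_trans[OF degree_smult_le]) (use A in auto)
  fix z assume "z \<in> xi ` A"
  then obtain c where c: "c \<in> A" "z = xi c" by auto
  have "poly ?q z = poly g z"
    using c A inj by (simp add: poly_sum poly_lagrange_basis_node if_distrib cong: if_cong)
  moreover have "poly (root_poly xi A) z = 0"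
    using c A by (auto simp: poly_root_poly intro: prod_zero)
  ultimately show "poly g z = poly (?p + ?q) z" by simp
qed (use inj deg in \<open>simp_all add: card_image\<close>)

lemma Qpol_eq_0_iff: "Qpol r K z = 0 \<longleftrightarrow> (\<exists>j\<in>{1..K}. z = r j)"
  by (simp add: Qpol_def)

lemma dfun_eq_Qpol: "dfun xi N = Qpol xi N"
  by (simp add: fun_eq_iff dfun_def Qpol_def)

lemma Qpol_eq_poly: "Qpol r K z = poly (root_poly r {1..K}) z"
  by (simp add: Qpol_def poly_root_poly)

lemma fcoef_eq:
  "fcoef eta xi N (Suc m) a z
     = poly (lagrange_basis xi {1..N} a) z / (\<Prod>r=1..m. dfun xi N (xi a + of_nat r * eta))"
proof -
  have "(\<Prod>b=1..N. \<Prod>r=1..m. 1 / (xi a - xi b + of_nat r * eta))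
      = (\<Prod>r=1..m. 1 / (\<Prod>b=1..N. xi a - xi b + of_nat r * eta))"
    by (subst prod.swap) (simp add: prod_dividef)
  also have "\<dots> = 1 / (\<Prod>r=1..m. dfun xi N (xi a + of_nat r * eta))"
    by (simp add: prod_dividef dfun_def algebra_simps)
  finally show ?thesis by (simp add: fcoef_def poly_lagrange_basis)
qed

lemma det_mat_2: "det (mat 2 2 f) = f (0, 0) * f (1, 1) - f (0, 1) * (f (1, 0) :: 'a::comm_ring_1)"
proof -
  have "det (mat 2 2 f) = (\<Sum>j<2. mat 2 2 f $$ (0, j) * cofactor (mat 2 2 f) 0 j)"
    by (rule laplace_expansion_row) auto
  then show ?thesis by (simp add: cofactor_def mat_delete_def det_single numeral_2_eq_2)
qed

lemma det_eq_0_if_columns_proportional: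
  fixes A :: "'a::idom mat"
  assumes A: "A \<in> carrier_mat n n" and jk: "j < n" "k < n" "j \<noteq> k"
    and col_j: "\<And>i. i < n \<Longrightarrow> A $$ (i, j) = p * c i"
    and col_k: "\<And>i. i < n \<Longrightarrow> A $$ (i, k) = q * c i"
  shows "det A = 0"
proof -
  have row: "row A i \<in> carrier_vec n" for i using A by (simp add: carrier_vecI)
  obtain v where v: "v \<in> carrier_vec n" "v \<noteq> 0\<^sub>v n" "\<And>i. i < n \<Longrightarrow> row A i \<bullet> v = 0"
  proof (cases "p = 0")
    case True
    show ?thesis
      by (rule that[of "unit_vec n j"]) (use A jk col_j True in auto)
  next
    case False
    let ?v = "q \<cdot>\<^sub>v unit_vec n j - p \<cdot>\<^sub>v unit_vec n k"
    show ?thesis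
    proof (rule that[of ?v])
      show "?v \<noteq> 0\<^sub>v n"
      proof
        assume "?v = 0\<^sub>v n"
        then have "?v $ k = 0" using jk by simp
        then show False using jk False by simp
      qed
      fix i assume "i < n"
      then show "row A i \<bullet> ?v = 0"
        using jk A col_j col_k by (simp add: scalar_prod_minus_distrib[OF row])
    qed simp
  qed
  have "A *\<^sub>v v = 0\<^sub>v n"
    using A v by (intro eq_vecI) auto
  then show ?thesis using det_0_iff_vec_prod_zero[OF A] v by blast
qed

lemma prod_shift_Suc:
  "f (w + c) * (\<Prod>r=1..n. f (w + c + of_nat r * c)) = (\<Prod>r=1..Suc n. f (w + of_nat r * c))"
proof -
  have "(\<Prod>r=1..Suc n. f (w + of_nat r * c)) = f (w + c) * (\<Prod>r=Suc 1..Suc n. f (w + of_nat r * c))"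
    by (subst prod.atLeast_Suc_atMost) simp_all
  also have "(\<Prod>r=Suc 1..Suc n. f (w + of_nat r * c)) = (\<Prod>r=1..n. f (w + c + of_nat r * c))"
    by (subst prod.shift_bounds_cl_Suc_ivl) (simp add: algebra_simps)
  finally show ?thesis by simp
qed

lemma tZ_of_nat: "tZ eta xi N k1 k2 k3 x (int k) z = tpol eta xi N k1 k2 k3 x k z"
  by (simp add: tZ_def del: tpol.simps)

locale bethe_solution =
  fixes eta k1 k2 k3 :: complex and N L M :: nat and xi lam mu x :: "nat \<Rightarrow> complex"
  assumes eta: "eta \<noteq> 0" and N: "N \<ge> 1"
    and xi: "\<And>a b. a \<in> {1..N} \<Longrightarrow> b \<in> {1..N} \<Longrightarrow> a \<noteq> b \<Longrightarrow> \<forall>k::int. xi a - xi b \<noteq> of_int k * eta"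
    and k1: "k1 \<noteq> 0"
    and BE1: "\<And>j. j \<in> {1..L} \<Longrightarrow>
       k1 * Qpol mu M (lam j) * afun eta xi N (lam j) = k2 * dfun xi N (lam j) * Qpol mu M (lam j + eta)"
    and BE2: "\<And>j. j \<in> {1..M} \<Longrightarrow>
       k2 * Qpol mu M (mu j + eta) * Qpol lam L (mu j - eta) = - k3 * Qpol mu M (mu j - eta) * Qpol lam L (mu j)"
    and dl: "\<And>l m. l \<in> {1..L} \<Longrightarrow> m \<in> {1..L} \<Longrightarrow> l \<noteq> m \<Longrightarrow> lam l \<noteq> lam m"
    and dm: "\<And>p q. p \<in> {1..M} \<Longrightarrow> q \<in> {1..M} \<Longrightarrow> p \<noteq> q \<Longrightarrow> mu p \<noteq> mu q"
    and dlm: "\<And>q m. q \<in> {1..M} \<Longrightarrow> m \<in> {1..L} \<Longrightarrow> mu q \<noteq> lam m"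
    and dmx: "\<And>h n. h \<in> {1..M} \<Longrightarrow> n \<in> {1..N} \<Longrightarrow> mu h \<noteq> xi n"
    and x_def: "x = (\<lambda>a. tBethe eta xi N k1 k2 k3 lam L mu M (xi a))"
begin

abbreviation "d \<equiv> dfun xi N"
abbreviation "Q1 \<equiv> Qpol lam L"
abbreviation "Q2 \<equiv> Qpol mu M"
abbreviation "t \<equiv> tpol eta xi N k1 k2 k3 x"

lemma d_eq_0_iff: "d z = 0 \<longleftrightarrow> (\<exists>b\<in>{1..N}. z = xi b)"
  by (simp add: dfun_eq_Qpol Qpol_eq_0_iff)

lemma inj_xi: "inj_on xi {1..N}"
proof (rule inj_onI, rule ccontr)
  fix a b assume "a \<in> {1..N}" "b \<in> {1..N}" "xi a = xi b" "a \<noteq> b"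
  then show False using xi[of a b] by (metis diff_self mult_zero_left of_int_0)
qed

lemma inj_lam: "inj_on lam {1..L}"
  by (rule inj_onI) (metis dl)

lemma inj_mu: "inj_on mu {1..M}"
  by (rule inj_onI) (metis dm)

lemma d_shift_nonzero:
  assumes a: "a \<in> {1..N}" and r: "r \<noteq> 0"
  shows "d (xi a + of_nat r * eta) \<noteq> 0"
proof
  assume "d (xi a + of_nat r * eta) = 0"
  then obtain b where b: "b \<in> {1..N}" "xi a + of_nat r * eta = xi b"
    by (auto simp: d_eq_0_iff)
  show False
  proof (cases "a = b")
    case True
    then show False using b(2) eta r by simp
  next
    case False
    have "xi a - xi b = of_int (- int r) * eta" using b(2) by (simp add: algebra_simps)
    then show False using xi[OF a b(1) False] by blast
  qed
qed

lemma lam_ne_xi: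
  assumes j: "j \<in> {1..L}" and a: "a \<in> {1..N}"
  shows "lam j \<noteq> xi a"
proof
  assume eq: "lam j = xi a"
  have "Q2 (lam j) \<noteq> 0" using dlm j by (force simp: Qpol_eq_0_iff)
  moreover have "d (lam j) = 0" using eq a by (auto simp: d_eq_0_iff)
  ultimately have "d (xi a + of_nat 1 * eta) = 0"
    using BE1[OF j] k1 eq by (simp add: afun_def)
  then show False using d_shift_nonzero[OF a, of 1] by simp
qed

lemma x_at_node:
  assumes a: "a \<in> {1..N}"
  shows "x a * Q1 (xi a) = k1 * d (xi a + eta) * Q1 (xi a - eta)"
proof -
  have "Q1 (xi a) \<noteq> 0" using lam_ne_xi a by (force simp: Qpol_eq_0_iff)
  moreover have "d (xi a) = 0" using a by (auto simp: d_eq_0_iff)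
  ultimately show ?thesis by (simp add: x_def tBethe_def afun_def)
qed

definition "d_poly = root_poly xi {1..N}"
definition "Q1_poly = root_poly lam {1..L}"
definition "Q2_poly = root_poly mu {1..M}"

lemma poly_d_poly [simp]: "poly d_poly z = d z"
  by (simp add: d_poly_def dfun_eq_Qpol Qpol_eq_poly)

lemma poly_Q1_poly [simp]: "poly Q1_poly z = Q1 z"
  by (simp add: Q1_poly_def Qpol_eq_poly)

lemma poly_Q2_poly [simp]: "poly Q2_poly z = Q2 z"
  by (simp add: Q2_poly_def Qpol_eq_poly)

lemma degree_d_poly [simp]: "degree d_poly = N"
  and degree_Q1_poly [simp]: "degree Q1_poly = L"
  and degree_Q2_poly [simp]: "degree Q2_poly = M"
  by (simp_all add: d_poly_def Q1_poly_def Q2_poly_def)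

lemma coeff_d_poly [simp]: "coeff d_poly N = 1"
  and coeff_Q1_poly [simp]: "coeff Q1_poly L = 1"
  and coeff_Q2_poly [simp]: "coeff Q2_poly M = 1"
  by (metis degree_d_poly d_poly_def lead_coeff_root_poly,
      metis degree_Q1_poly Q1_poly_def lead_coeff_root_poly,
      metis degree_Q2_poly Q2_poly_def lead_coeff_root_poly)

lemma d_poly_nonzero [simp]: "d_poly \<noteq> 0"
  and Q1_poly_nonzero [simp]: "Q1_poly \<noteq> 0"
  and Q2_poly_nonzero [simp]: "Q2_poly \<noteq> 0"
  by (simp_all add: d_poly_def Q1_poly_def Q2_poly_def)

lemma poly_lagrange_interpolation:
  assumes "degree g \<le> N"
  shows "poly g z = coeff g N * d z + (\<Sum>a=1..N. poly (lagrange_basis xi {1..N} a) z * poly g (xi a))"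
proof -
  have "g = smult (coeff g N) d_poly + (\<Sum>a=1..N. smult (poly g (xi a)) (lagrange_basis xi {1..N} a))"
    using lagrange_interpolation[of "{1..N}" xi g] N inj_xi assms by (simp add: d_poly_def)
  then have "poly g z = poly (smult (coeff g N) d_poly
      + (\<Sum>a=1..N. smult (poly g (xi a)) (lagrange_basis xi {1..N} a))) z"
    by (rule arg_cong)
  then show ?thesis by (simp add: poly_sum mult.commute)
qed

definition "t1_poly = smult (Tinf k1 k2 k3 1) d_poly
   + (\<Sum>a=1..N. smult (x a) (lagrange_basis xi {1..N} a))"

lemma poly_t1_poly [simp]: "poly t1_poly z = t 1 z"
  by (simp add: t1_poly_def poly_sum fcoef_eq mult.commute)

lemma degree_lagrange_sum_less:
  "degree (\<Sum>a=1..N. smult (c a) (lagrange_basis xi {1..N} a)) < N"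
proof -
  have "degree (\<Sum>a=1..N. smult (c a) (lagrange_basis xi {1..N} a)) \<le> N - 1"
    by (intro degree_sum_le order_trans[OF degree_smult_le])
      (use degree_lagrange_basis[of "{1..N}"] in auto)
  then show ?thesis using N by linarith
qed

lemma degree_t1_poly: "degree t1_poly \<le> N"
  unfolding t1_poly_def using degree_lagrange_sum_less[of x]
  by (intro degree_add_le order_trans[OF degree_smult_le]) auto

lemma coeff_t1_poly: "coeff t1_poly N = k1 - k2 - k3"
  using degree_lagrange_sum_less[of x] by (simp add: t1_poly_def Tinf_def coeff_eq_0)

lemma t1_at_node:
  assumes a: "a \<in> {1..N}"
  shows "t 1 (xi a) = x a"
proof -
  have "poly t1_poly (xi a) = x a"
    using inj_xi a by (auto simp: t1_poly_def poly_sum d_eq_0_iff poly_lagrange_basis_node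
        if_distrib cong: if_cong simp del: poly_t1_poly)
  then show ?thesis by simp
qed

lemma t1_Bethe_identity:
  "t 1 z * Q1 z * Q2 z = k1 * d (z + eta) * Q1 (z - eta) * Q2 z
     - k2 * d z * Q1 (z - eta) * Q2 (z + eta) - k3 * d z * Q1 z * Q2 (z - eta)"
proof -
  let ?K = "N + L + M"
  define num where "num = smult k1 (shift_poly d_poly eta * shift_poly Q1_poly (- eta) * Q2_poly)
     - smult k2 (d_poly * shift_poly Q1_poly (- eta) * shift_poly Q2_poly eta)
     - smult k3 (d_poly * Q1_poly * shift_poly Q2_poly (- eta))"
  have monic_degree: "degree (shift_poly d_poly a * shift_poly Q1_poly b * shift_poly Q2_poly c) = ?K"
    for a b c by (simp add: degree_mult_eq)
  have monic_coeff: "coeff (shift_poly d_poly a * shift_poly Q1_poly b * shift_poly Q2_poly c) ?K = 1"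
    for a b c
    using monic_degree[of a b c] by (simp add: lead_coeff_mult coeff_shift_poly
        flip: monic_degree[of a b c])
  have degree_t1_Q1: "degree (t1_poly * Q1_poly) \<le> N + L"
    using degree_mult_le[of t1_poly Q1_poly] degree_t1_poly by simp
  have "num = t1_poly * Q1_poly * Q2_poly"
  proof (rule poly_eqI_degree_lead_coeff[where n = ?K
        and A = "xi ` {1..N} \<union> lam ` {1..L} \<union> mu ` {1..M}"])
    show "coeff num ?K = coeff (t1_poly * Q1_poly * Q2_poly) ?K"
      using monic_coeff[of eta "- eta" 0] monic_coeff[of 0 "- eta" eta] monic_coeff[of 0 0 "- eta"]
        coeff_mult_degree_le[OF degree_t1_Q1, of Q2_poly M]
        coeff_mult_degree_le[OF degree_t1_poly, of Q1_poly L]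
      by (simp add: num_def coeff_t1_poly)
    show "degree num \<le> ?K"
      using monic_degree[of eta "- eta" 0] monic_degree[of 0 "- eta" eta] monic_degree[of 0 0 "- eta"]
      by (auto simp: num_def intro!: degree_diff_le order_trans[OF degree_smult_le])
    show "degree (t1_poly * Q1_poly * Q2_poly) \<le> ?K"
      using degree_t1_Q1 degree_mult_le[of "t1_poly * Q1_poly" Q2_poly] by simp
    have "xi ` {1..N} \<inter> lam ` {1..L} = {}" using lam_ne_xi by force
    moreover have "(xi ` {1..N} \<union> lam ` {1..L}) \<inter> mu ` {1..M} = {}" using dmx dlm by force
    ultimately show "?K \<le> card (xi ` {1..N} \<union> lam ` {1..L} \<union> mu ` {1..M})"
      using inj_xi inj_lam inj_mu by (simp add: card_Un_disjoint card_image)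
    fix s assume "s \<in> xi ` {1..N} \<union> lam ` {1..L} \<union> mu ` {1..M}"
    then consider (xi) a where "a \<in> {1..N}" "s = xi a" | (lam) j where "j \<in> {1..L}" "s = lam j"
      | (mu) j where "j \<in> {1..M}" "s = mu j" by blast
    then show "poly num s = poly (t1_poly * Q1_poly * Q2_poly) s"
    proof cases
      case xi
      then have "d s = 0" by (auto simp: d_eq_0_iff)
      then show ?thesis using x_at_node[OF xi(1)] t1_at_node[OF xi(1)] xi(2) by (simp add: num_def)
    next
      case lam
      then have "Q1 s = 0" by (auto simp: Qpol_eq_0_iff)
      then show ?thesis using BE1[OF lam(1)] lam(2) by (simp add: num_def afun_def algebra_simps)
    next
      case mu
      then have "Q2 s = 0" by (auto simp: Qpol_eq_0_iff)
      then have "poly num s = - d s * (k2 * Q2 (s + eta) * Q1 (s - eta) + k3 * Q2 (s - eta) * Q1 s)"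
        by (simp add: num_def algebra_simps)
      also have "\<dots> = 0" using BE2[OF mu(1)] mu(2) by simp
      finally show ?thesis using \<open>Q2 s = 0\<close> by simp
    qed
  qed
  then have "poly num z = poly (t1_poly * Q1_poly * Q2_poly) z" by simp
  then show ?thesis by (simp add: num_def algebra_simps)
qed

(* Evaluating t1_Bethe_identity at lam j + eta directly fails when lam j + eta is itself a
   root of Q1; cancelling Q1 as a polynomial factor first avoids this. *)
lemma t1_at_shifted_Bethe_root:
  assumes j: "j \<in> {1..L}"
  shows "Q2 (lam j + eta) * t 1 (lam j + eta) = - k3 * d (lam j + eta) * Q2 (lam j)"
proof -
  define Y where "Y = smult k1 (shift_poly d_poly eta * Q2_poly) - smult k2 (d_poly * shift_poly Q2_poly eta)"
  define X where "X = Q2_poly * t1_poly + smult k3 (d_poly * shift_poly Q2_poly (- eta))"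
  have "Q1_poly dvd Y"
    unfolding Q1_poly_def
    by (rule root_poly_dvd) (use inj_lam BE1 in \<open>auto simp: Y_def afun_def algebra_simps\<close>)
  then obtain Z where Z: "Y = Q1_poly * Z" by (elim dvdE)
  have "poly (Q1_poly * X) z = poly (shift_poly Q1_poly (- eta) * Y) z" for z
    using t1_Bethe_identity[of z] by (simp add: X_def Y_def algebra_simps)
  then have "Q1_poly * X = Q1_poly * (shift_poly Q1_poly (- eta) * Z)"
    unfolding Z by (simp add: poly_eq_poly_eq_iff[symmetric] fun_eq_iff ac_simps)
  then have "X = shift_poly Q1_poly (- eta) * Z" by simp
  then have "poly X (lam j + eta) = Q1 (lam j) * poly Z (lam j + eta)" by simp
  also have "Q1 (lam j) = 0" using j by (auto simp: Qpol_eq_0_iff)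
  finally have "Q2 (lam j + eta) * t 1 (lam j + eta) + k3 * d (lam j + eta) * Q2 (lam j) = 0"
    by (simp add: X_def algebra_simps del: tpol.simps)
  then show ?thesis by (simp add: algebra_simps eq_neg_iff_add_eq_0 del: tpol.simps)
qed

lemma E_vanishes_at_Bethe_root:
  assumes j: "j \<in> {1..L}"
  shows "k1 * t 1 (lam j + eta) + k2 * k3 * d (lam j) = 0"
proof -
  have "Q2 (lam j + eta) \<noteq> 0"
  proof
    assume "Q2 (lam j + eta) = 0"
    then obtain h where h: "h \<in> {1..M}" "lam j + eta = mu h" by (auto simp: Qpol_eq_0_iff)
    have "Q2 (lam j) \<noteq> 0" using dlm j by (force simp: Qpol_eq_0_iff)
    then have "d (lam j + eta) = 0"
      using BE1[OF j] k1 \<open>Q2 (lam j + eta) = 0\<close> by (simp add: afun_def)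
    then show False using dmx[OF h(1)] h(2) by (auto simp: d_eq_0_iff)
  qed
  moreover have "Q2 (lam j + eta) * (k1 * t 1 (lam j + eta) + k2 * k3 * d (lam j))
      = k3 * (k2 * d (lam j) * Q2 (lam j + eta) - k1 * Q2 (lam j) * afun eta xi N (lam j))"
    using t1_at_shifted_Bethe_root[OF j] by (simp add: afun_def algebra_simps del: tpol.simps)
  ultimately show ?thesis using BE1[OF j] by simp
qed

definition "E_poly = smult k1 (shift_poly t1_poly eta) + smult (k2 * k3) d_poly"

definition "F_poly = E_poly div Q1_poly"

lemma poly_E_poly: "poly E_poly w = k1 * t 1 (w + eta) + k2 * k3 * d w"
  by (simp add: E_poly_def)

lemma E_poly_eq: "E_poly = Q1_poly * F_poly"
proof -
  have "Q1_poly dvd E_poly"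
    unfolding Q1_poly_def
    by (rule root_poly_dvd) (use inj_lam E_vanishes_at_Bethe_root in \<open>auto simp: poly_E_poly\<close>)
  then show ?thesis by (simp add: F_poly_def)
qed

lemma degree_E_poly: "degree E_poly \<le> N"
  unfolding E_poly_def using degree_t1_poly
  by (intro degree_add_le order_trans[OF degree_smult_le]) auto

lemma coeff_E_poly: "coeff E_poly N = (k1 - k2) * (k1 - k3)"
  using degree_t1_poly by (simp add: E_poly_def coeff_shift_poly coeff_t1_poly algebra_simps)

definition "S_poly n = smult (k1 ^ n) (shift_poly Q1_poly (- eta) * shift_poly F_poly (of_nat n * eta))"

lemma poly_S_poly: "poly (S_poly n) z = k1 ^ n * Q1 (z - eta) * poly F_poly (z + of_nat n * eta)"
  by (simp add: S_poly_def)

lemma degree_S_poly: "degree (S_poly n) \<le> N"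
  using degree_E_poly degree_smult_le[of "k1 ^ n"]
  by (simp add: S_poly_def degree_mult_shift_poly flip: E_poly_eq)

lemma coeff_S_poly: "coeff (S_poly n) N = Tinf k1 k2 k3 (Suc (Suc n))"
proof -
  let ?P = "shift_poly Q1_poly (- eta) * shift_poly F_poly (of_nat n * eta)"
  have "degree ?P = degree E_poly" "lead_coeff ?P = lead_coeff E_poly"
    by (metis E_poly_eq degree_mult_shift_poly, metis E_poly_eq lead_coeff_mult_shift_poly)
  then have "coeff ?P N = coeff E_poly N"
    using degree_E_poly by (metis coeff_eq_if_degree_lead_coeff_eq)
  then show ?thesis by (simp add: S_poly_def coeff_E_poly Tinf_def)
qed

lemma t_Suc_Suc_eq_interpolant:
  assumes deg: "degree S \<le> N" and coeff: "coeff S N = Tinf k1 k2 k3 (Suc (Suc n))"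
    and nodes: "\<And>a. a \<in> {1..N} \<Longrightarrow>
      t (Suc n) (xi a + eta) * x a = (\<Prod>r=1..Suc n. d (xi a + of_nat r * eta)) * poly S (xi a)"
  shows "t (Suc (Suc n)) z = (\<Prod>r=1..Suc n. d (z + of_nat r * eta)) * poly S z"
proof -
  have summand: "fcoef eta xi N (Suc (Suc n)) a z * t (Suc n) (xi a + eta) * x a
      = poly (lagrange_basis xi {1..N} a) z * poly S (xi a)" if a: "a \<in> {1..N}" for a
  proof -
    let ?D = "\<Prod>r=1..Suc n. d (xi a + of_nat r * eta)"
    have "?D \<noteq> 0"
      using d_shift_nonzero[OF a] by (subst prod_zero_iff) auto
    have "fcoef eta xi N (Suc (Suc n)) a z * t (Suc n) (xi a + eta) * x a
        = poly (lagrange_basis xi {1..N} a) z / ?D * (t (Suc n) (xi a + eta) * x a)"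
      by (simp only: fcoef_eq mult.assoc)
    also have "\<dots> = poly (lagrange_basis xi {1..N} a) z / ?D * (?D * poly S (xi a))"
      by (simp only: nodes[OF a])
    finally show ?thesis using \<open>?D \<noteq> 0\<close> by simp
  qed
  have "t (Suc (Suc n)) z = (\<Prod>r=1..Suc n. d (z + of_nat r * eta))
      * (Tinf k1 k2 k3 (Suc (Suc n)) * d z
         + (\<Sum>a=1..N. fcoef eta xi N (Suc (Suc n)) a z * t (Suc n) (xi a + eta) * x a))"
    by (simp only: tpol.simps)
  also have "\<dots> = (\<Prod>r=1..Suc n. d (z + of_nat r * eta))
      * (coeff S N * d z + (\<Sum>a=1..N. poly (lagrange_basis xi {1..N} a) z * poly S (xi a)))"
    by (simp only: coeff summand cong: sum.cong)
  also have "\<dots> = (\<Prod>r=1..Suc n. d (z + of_nat r * eta)) * poly S z"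
    by (simp only: poly_lagrange_interpolation[OF deg, symmetric])
  finally show ?thesis .
qed

lemma t_closed_form:
  "t (Suc (Suc n)) z = (\<Prod>r=1..Suc n. d (z + of_nat r * eta)) * poly (S_poly n) z"
proof (induction n arbitrary: z)
  case 0
  show ?case
  proof (rule t_Suc_Suc_eq_interpolant[OF degree_S_poly coeff_S_poly])
    fix a assume a: "a \<in> {1..N}"
    have "Q1 (xi a) \<noteq> 0" using lam_ne_xi a by (force simp: Qpol_eq_0_iff)
    have "d (xi a) = 0" using a by (auto simp: d_eq_0_iff)
    then have E: "Q1 (xi a) * poly F_poly (xi a) = k1 * t 1 (xi a + eta)"
      using poly_E_poly[of "xi a"] by (simp add: E_poly_eq del: tpol.simps)
    have "Q1 (xi a) * (t 1 (xi a + eta) * x a) = t 1 (xi a + eta) * (x a * Q1 (xi a))"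
      by (simp only: ac_simps)
    also have "\<dots> = k1 * t 1 (xi a + eta) * (d (xi a + eta) * Q1 (xi a - eta))"
      by (simp add: x_at_node[OF a] algebra_simps del: tpol.simps)
    also have "\<dots> = Q1 (xi a) * poly F_poly (xi a) * (d (xi a + eta) * Q1 (xi a - eta))"
      by (simp only: E)
    also have "\<dots> = Q1 (xi a) * (d (xi a + eta) * Q1 (xi a - eta) * poly F_poly (xi a))"
      by (simp only: ac_simps)
    finally have "t 1 (xi a + eta) * x a = d (xi a + eta) * Q1 (xi a - eta) * poly F_poly (xi a)"
      using \<open>Q1 (xi a) \<noteq> 0\<close> by (simp del: tpol.simps)
    then show "t (Suc 0) (xi a + eta) * x a
        = (\<Prod>r=1..Suc 0. d (xi a + of_nat r * eta)) * poly (S_poly 0) (xi a)"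
      by (simp add: poly_S_poly mult.assoc del: tpol.simps)
  qed
next
  case (Suc m)
  show ?case
  proof (rule t_Suc_Suc_eq_interpolant[OF degree_S_poly coeff_S_poly])
    fix a assume a: "a \<in> {1..N}"
    have "t (Suc (Suc m)) (xi a + eta) * x a
        = (\<Prod>r=1..Suc m. d (xi a + eta + of_nat r * eta)) * k1 ^ m
          * poly F_poly (xi a + of_nat (Suc m) * eta) * (x a * Q1 (xi a))"
      by (simp only: Suc.IH poly_S_poly) (simp add: algebra_simps)
    also have "\<dots> = (\<Prod>r=1..Suc (Suc m). d (xi a + of_nat r * eta)) * poly (S_poly (Suc m)) (xi a)"
      by (simp only: x_at_node[OF a] poly_S_poly prod_shift_Suc[of d, symmetric]) (simp add: ac_simps)
    finally show "t (Suc (Suc m)) (xi a + eta) * x a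
        = (\<Prod>r=1..Suc (Suc m). d (xi a + of_nat r * eta)) * poly (S_poly (Suc m)) (xi a)" .
  qed
qed

lemma out_boundary: "tfused eta xi N k1 k2 k3 x (2 + n) (3 + m) z = 0"
proof -
  define A where "A = mat (2 + n) (2 + n)
    (\<lambda>(i, j). tZ eta xi N k1 k2 k3 x (int (3 + m) + int i - int j) (z - of_nat i * eta))"
  define c where "c i = (\<Prod>r=1..Suc (m + i). d (z - of_nat i * eta + of_nat r * eta))
    * k1 ^ (m + i) * Q1 (z - of_nat i * eta - eta)" for i
  have col0: "A $$ (i, 0) = (k1 * d (z + of_nat (Suc (Suc m)) * eta) * poly F_poly (z + of_nat (Suc m) * eta)) * c i"
    if "i < 2 + n" for i
  proof -
    let ?w = "z - of_nat i * eta"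
    have "A $$ (i, 0) = tZ eta xi N k1 k2 k3 x (int (Suc (Suc (Suc (m + i))))) ?w"
      using that by (simp add: A_def ac_simps)
    also have "\<dots> = t (Suc (Suc (Suc (m + i)))) ?w"
      by (rule tZ_of_nat)
    also have "\<dots> = (\<Prod>r=1..Suc (Suc (m + i)). d (?w + of_nat r * eta))
        * (k1 ^ Suc (m + i) * Q1 (?w - eta) * poly F_poly (?w + of_nat (Suc (m + i)) * eta))"
      by (simp only: t_closed_form poly_S_poly)
    also have "(\<Prod>r=1..Suc (Suc (m + i)). d (?w + of_nat r * eta))
        = (\<Prod>r=1..Suc (m + i). d (?w + of_nat r * eta)) * d (?w + of_nat (Suc (Suc (m + i))) * eta)"
      by (simp only: prod.cl_ivl_Suc) simp
    also have "?w + of_nat (Suc (Suc (m + i))) * eta = z + of_nat (Suc (Suc m)) * eta"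
      by (simp add: algebra_simps)
    also have "?w + of_nat (Suc (m + i)) * eta = z + of_nat (Suc m) * eta"
      by (simp add: algebra_simps)
    finally show ?thesis by (simp add: c_def ac_simps)
  qed
  have col1: "A $$ (i, 1) = poly F_poly (z + of_nat m * eta) * c i" if "i < 2 + n" for i
  proof -
    let ?w = "z - of_nat i * eta"
    have "A $$ (i, 1) = tZ eta xi N k1 k2 k3 x (int (Suc (Suc (m + i)))) ?w"
      using that by (simp add: A_def ac_simps)
    also have "\<dots> = t (Suc (Suc (m + i))) ?w"
      by (rule tZ_of_nat)
    also have "\<dots> = (\<Prod>r=1..Suc (m + i). d (?w + of_nat r * eta))
        * (k1 ^ (m + i) * Q1 (?w - eta) * poly F_poly (?w + of_nat (m + i) * eta))"
      by (simp only: t_closed_form poly_S_poly)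
    also have "?w + of_nat (m + i) * eta = z + of_nat m * eta"
      by (simp add: algebra_simps)
    finally show ?thesis by (simp add: c_def ac_simps)
  qed
  have "det A = 0"
    by (rule det_eq_0_if_columns_proportional[OF _ _ _ _ col0 col1]) (simp_all add: A_def)
  then show ?thesis by (simp add: tfused_def A_def)
qed

lemma tfused_2_2: "tfused eta xi N k1 k2 k3 x 2 2 w = t 2 w * t 2 (w - eta) - t 1 w * t 3 (w - eta)"
  by (simp add: tfused_def det_mat_2 tZ_def)

lemma inner_boundary:
  "k2 * k3 * d z * t 3 z = k1 * (t 2 z * t 2 (z + eta) - t 3 z * t 1 (z + eta))"
proof -
  have t2: "t 2 w = d (w + eta) * Q1 (w - eta) * poly F_poly w" for w
    using t_closed_form[of 0 w] by (simp add: numeral_2_eq_2 poly_S_poly del: tpol.simps)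
  have t3: "t 3 z = d (z + eta) * d (z + 2 * eta) * k1 * Q1 (z - eta) * poly F_poly (z + eta)"
    using t_closed_form[of 1 z] by (simp add: numeral_3_eq_3 poly_S_poly mult_2 ac_simps del: tpol.simps)
  have t1: "k1 * t 1 (z + eta) = Q1 z * poly F_poly z - k2 * k3 * d z"
    using poly_E_poly[of z] by (simp add: E_poly_eq del: tpol.simps)
  have "k1 * (t 2 z * t 2 (z + eta) - t 3 z * t 1 (z + eta))
      = k1 * t 2 z * t 2 (z + eta) - t 3 z * (k1 * t 1 (z + eta))"
    by (simp add: algebra_simps del: tpol.simps)
  also have "\<dots> = k2 * k3 * d z * t 3 z"
    unfolding t1 t2 t3 by (simp add: algebra_simps mult_2)
  finally show ?thesis by simp
qed

end

theorem lemmaA2: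
  fixes eta k1 k2 k3 :: complex and N L M :: nat and xi lam mu :: "nat \<Rightarrow> complex"
  assumes eta: "eta \<noteq> 0" and N: "N \<ge> 1"
    and xi: "\<And>a b. a \<in> {1..N} \<Longrightarrow> b \<in> {1..N} \<Longrightarrow> a \<noteq> b \<Longrightarrow> \<forall>k::int. xi a - xi b \<noteq> of_int k * eta"
    and k: "k1 \<noteq> 0" "k2 \<noteq> 0" "k3 \<noteq> 0"
    and BE1: "\<And>j. j \<in> {1..L} \<Longrightarrow>
       k1 * Qpol mu M (lam j) * afun eta xi N (lam j) = k2 * dfun xi N (lam j) * Qpol mu M (lam j + eta)"
    and BE2: "\<And>j. j \<in> {1..M} \<Longrightarrow>
       k2 * Qpol mu M (mu j + eta) * Qpol lam L (mu j - eta) = - k3 * Qpol mu M (mu j - eta) * Qpol lam L (mu j)"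
    and dl: "\<And>l m. l \<in> {1..L} \<Longrightarrow> m \<in> {1..L} \<Longrightarrow> l \<noteq> m \<Longrightarrow> lam l \<noteq> lam m"
    and dm: "\<And>p q. p \<in> {1..M} \<Longrightarrow> q \<in> {1..M} \<Longrightarrow> p \<noteq> q \<Longrightarrow> mu p \<noteq> mu q"
    and dlm: "\<And>q m. q \<in> {1..M} \<Longrightarrow> m \<in> {1..L} \<Longrightarrow> mu q \<noteq> lam m"
    and dmx: "\<And>h n. h \<in> {1..M} \<Longrightarrow> n \<in> {1..N} \<Longrightarrow> mu h \<noteq> xi n"
  defines "x \<equiv> (\<lambda>a. tBethe eta xi N k1 k2 k3 lam L mu M (xi a))"
  shows "(\<forall>z n m. tfused eta xi N k1 k2 k3 x (2 + n) (3 + m) z = 0)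
       \<and> (\<forall>z. k2 * k3 * dfun xi N z * tpol eta xi N k1 k2 k3 x 3 z
               = k1 * tfused eta xi N k1 k2 k3 x 2 2 (z + eta))
       \<and> (\<forall>z. k2 * k3 * dfun xi N z * tpol eta xi N k1 k2 k3 x 3 z
               = k1 * (tpol eta xi N k1 k2 k3 x 2 z * tpol eta xi N k1 k2 k3 x 2 (z + eta)
                       - tpol eta xi N k1 k2 k3 x 3 z * tpol eta xi N k1 k2 k3 x 1 (z + eta)))"
proof -
  interpret bethe_solution eta k1 k2 k3 N L M xi lam mu x
    unfolding bethe_solution_def using eta N xi k(1) BE1 BE2 dl dm dlm dmx by (simp add: x_def)
  have "tfused eta xi N k1 k2 k3 x 2 2 (z + eta) = t 2 z * t 2 (z + eta) - t 3 z * t 1 (z + eta)" for z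
    using tfused_2_2[of "z + eta"] by (simp add: ac_simps del: tpol.simps)
  then show ?thesis using out_boundary inner_boundary by simp
qed

end
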